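(* Let $f_1,\dots,f_N$, $\Phi$ and the iterates $x_k$, directions $d_k$ be as defined in the context (Algorithm X). If $d_k\ne 0$, then $\Phi'(x_k;d_k)<0$.
   Context: Standing assumptions: $f_1,\dots,f_N:\mathbb{R}^n\to\mathbb{R}$; (H1) there is $M\in\mathbb{R}$ with $f_j(x)\ge M$ for all $x$ and $j$; (H2) each $f_j\in C^1(\mathbb{R}^n)$ and there is a modulus of continuity $w$ (increasing $w:[0,\infty)\to[0,\infty)$, $w(0)=0$, continuous at $0$) with $\|\nabla f_j(x)-\nabla f_j(y)\|\le w(\|x-y\|)$ for all $x,y$ and $j$. Let $\Phi(x)=\max_{1\le j\le N}f_j(x)$, and $g'(x;d)=\lim_{t\to0^+}\frac{g(x+td)-g(x)}{t}$ denotes the directional derivative. Algorithm X: set $x_0=0$, $c=\sigma=\tfrac12$. At iteration $k$: let $G\in\mathbb{R}^{N\times n}$ have $j$-th row $\nabla f_j(x_k)^T$, $f=(f_1(x_k),\dots,f_N(x_k))^T$; let $\lambda$ be a solution of $\min_\lambda(\tfrac12\lambda^TGG^T\lambda-f^T\lambda)$ subject to $\sum_i\lambda_i=1$, $\lambda_i\ge0$; set $p_k=-G^T\lambda$, and $d_k=0$ if $p_k=0$, otherwise $d_k=p_k/\|p_k\|$. If $d_k=0$ set $\alpha_k=1$; otherwise $\alpha_k=\sigma^j$ where $j$ is the smallest nonnegative integer with $\Phi(x_k+\sigma^jd_k)<\Phi(x_k)+c\sigma^j\Phi'(x_k;d_k)$. Set $x_{k+1}=x_k+\alpha_kd_k$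 and repeat. *)

theory Defs
  imports "HOL-Analysis.Analysis"
begin

text \<open>Phi(x) = max_j f_j(x); the index type 'm is finite (N = CARD('m) \<ge> 1).\<close>
definition Phi :: "('m::finite \<Rightarrow> 'a \<Rightarrow> real) \<Rightarrow> 'a \<Rightarrow> real" where
  "Phi f x = Max (range (\<lambda>j. f j x))"

definition dir_deriv :: "('a::real_normed_vector \<Rightarrow> real) \<Rightarrow> 'a \<Rightarrow> 'a \<Rightarrow> real" where
  "dir_deriv g x d = Lim (at_right 0) (\<lambda>t. (g (x + t *\<^sub>R d) - g x) / t)"

definition unit_simplex :: "('m::finite \<Rightarrow> real) set" where
  "unit_simplex = {lam. (\<forall>i. lam i \<ge> 0) \<and> sum lam UNIV = 1}"

text \<open>QP objective (1/2) lam^T G G^T lam - f^T lam at the point x,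
  where G has j-th row grad f_j(x)^T, so lam^T G G^T lam = norm (G^T lam)^2.\<close>
definition qp_obj :: "('m::finite \<Rightarrow> real ^ 'n \<Rightarrow> real) \<Rightarrow> ('m \<Rightarrow> real ^ 'n \<Rightarrow> real ^ 'n)
    \<Rightarrow> real ^ 'n \<Rightarrow> ('m \<Rightarrow> real) \<Rightarrow> real" where
  "qp_obj f gradf x lam =
     (1/2) * (norm (\<Sum>j\<in>UNIV. lam j *\<^sub>R gradf j x))\<^sup>2 - (\<Sum>j\<in>UNIV. lam j * f j x)"

text \<open>Armijo condition for trial exponent i, with c = sigma = 1/2.\<close>
definition armijo :: "('m::finite \<Rightarrow> real ^ 'n \<Rightarrow> real) \<Rightarrow> real ^ 'n \<Rightarrow> real ^ 'n \<Rightarrow> nat \<Rightarrow> bool" where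
  "armijo f xk dk i \<longleftrightarrow>
     Phi f (xk + ((1/2::real) ^ i) *\<^sub>R dk)
       < Phi f xk + (1/2) * ((1/2::real) ^ i) * dir_deriv (Phi f) xk dk"

text \<open>The sequences x, lam, p, d, alpha are generated by Algorithm X
  (lam k is any solution of the QP at x k).\<close>
definition algX :: "('m::finite \<Rightarrow> real ^ 'n \<Rightarrow> real) \<Rightarrow> ('m \<Rightarrow> real ^ 'n \<Rightarrow> real ^ 'n)
    \<Rightarrow> (nat \<Rightarrow> real ^ 'n) \<Rightarrow> (nat \<Rightarrow> 'm \<Rightarrow> real) \<Rightarrow> (nat \<Rightarrow> real ^ 'n)
    \<Rightarrow> (nat \<Rightarrow> real ^ 'n) \<Rightarrow> (nat \<Rightarrow> real) \<Rightarrow> bool" where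
  "algX f gradf x lam p d alpha \<longleftrightarrow>
     x 0 = 0 \<and>
     (\<forall>k.
        lam k \<in> unit_simplex \<and>
        (\<forall>mu\<in>unit_simplex. qp_obj f gradf (x k) (lam k) \<le> qp_obj f gradf (x k) mu) \<and>
        p k = - (\<Sum>j\<in>UNIV. lam k j *\<^sub>R gradf j (x k)) \<and>
        d k = (if p k = 0 then 0 else (1 / norm (p k)) *\<^sub>R p k) \<and>
        (d k = 0 \<longrightarrow> alpha k = 1) \<and>
        (d k \<noteq> 0 \<longrightarrow> (\<exists>i. alpha k = (1/2) ^ i \<and> armijo f (x k) (d k) i
                                \<and> (\<forall>i'<i. \<not> armijo f (x k) (d k) i'))) \<and>
        x (Suc k) = x k + alpha k *\<^sub>R d k)"

end

theory Submission
  imports Defs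
begin

text \<open>
  Let \<open>s = \<Sum>j. lam\<^sub>j \<nabla>f\<^sub>j(x)\<close>, so that \<open>p = -s\<close>. Comparing the QP value at its minimiser
  \<open>lam\<close> with the values along the segment from \<open>lam\<close> to a vertex \<open>e\<^sub>i\<close> of the simplex gives the
  first-order condition \<open>f\<^sub>i(x) - \<Sum>j. lam\<^sub>j f\<^sub>j(x) \<le> s \<bullet> (\<nabla>f\<^sub>i(x) - s)\<close>. For an active index
  (\<open>f\<^sub>i(x) = \<Phi>(x)\<close>) the left-hand side is nonnegative, hence \<open>\<nabla>f\<^sub>i(x) \<bullet> p \<le> -|p|\<^sup>2 < 0\<close>.
  On the other hand, the directional derivative of a finite maximum of differentiable
  functions is the maximum of the directional derivatives of the active ones (Danskin),
  so \<open>\<Phi>'(x;d)\<close> is a maximum of negative numbers.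
\<close>

definition active_set :: "('m::finite \<Rightarrow> 'a \<Rightarrow> real) \<Rightarrow> 'a \<Rightarrow> 'm set" where
  "active_set f x = {j. f j x = Phi f x}"

lemma Phi_ge: "f j x \<le> Phi (f :: 'm::finite \<Rightarrow> 'a \<Rightarrow> real) x"
  unfolding Phi_def by (rule Max_ge) auto

lemma Phi_attained: "\<exists>j. Phi (f :: 'm::finite \<Rightarrow> 'a \<Rightarrow> real) x = f j x"
proof -
  have "Phi f x \<in> range (\<lambda>j. f j x)" unfolding Phi_def by (rule Max_in) auto
  then show ?thesis by auto
qed

lemma active_set_nonempty: "active_set f x \<noteq> {}"
  using Phi_attained[of f x] by (auto simp: active_set_def)

lemma convex_combination_le_Phi:
  fixes f :: "'m::finite \<Rightarrow> 'a \<Rightarrow> real"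
  assumes "lam \<in> unit_simplex"
  shows "(\<Sum>j\<in>UNIV. lam j * f j x) \<le> Phi f x"
proof -
  have "(\<Sum>j\<in>UNIV. lam j * f j x) \<le> (\<Sum>j\<in>UNIV. lam j * Phi f x)"
    using assms by (intro sum_mono mult_left_mono Phi_ge) (auto simp: unit_simplex_def)
  also have "\<dots> = Phi f x"
    using assms by (simp add: sum_distrib_right[symmetric] unit_simplex_def)
  finally show ?thesis .
qed

lemma has_derivative_dir_quotient_tendsto:
  fixes F :: "'a::real_normed_vector \<Rightarrow> real"
  assumes "(F has_derivative F') (at x)"
  shows "((\<lambda>t. (F (x + t *\<^sub>R d) - F x) / t) \<longlongrightarrow> F' d) (at_right 0)"
proof -
  have lin: "bounded_linear F'" using assms by (rule has_derivative_bounded_linear)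
  have line: "((\<lambda>t. x + t *\<^sub>R d) has_derivative (\<lambda>s. s *\<^sub>R d)) (at 0)"
    by (auto intro!: derivative_eq_intros)
  have "((\<lambda>t. F (x + t *\<^sub>R d)) has_derivative (\<lambda>s. F' (s *\<^sub>R d))) (at 0)"
    using has_derivative_compose[OF line, of F F'] assms by simp
  then have "((\<lambda>t. F (x + t *\<^sub>R d)) has_field_derivative F' d) (at 0)"
    using lin by (simp add: has_field_derivative_def linear_simps mult.commute[of _ "F' d"])
  then have "((\<lambda>t. F (x + t *\<^sub>R d)) has_field_derivative F' d) (at_right 0)"
    by (rule has_field_derivative_at_within)
  then show ?thesis by (simp add: has_field_derivative_iff)
qed

lemma Phi_dir_quotient_tendsto:
  fixes f :: "'m::finite \<Rightarrow> 'a::real_normed_vector \<Rightarrow> real"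
  assumes deriv: "\<And>j. (f j has_derivative f' j) (at x)"
  shows "((\<lambda>t. (Phi f (x + t *\<^sub>R d) - Phi f x) / t) \<longlongrightarrow> Max ((\<lambda>j. f' j d) ` active_set f x))
           (at_right 0)"
proof -
  define A where "A = active_set f x"
  obtain j0 where j0: "j0 \<in> A" using active_set_nonempty[of f x] unfolding A_def by blast
  have tendsto_along_ray: "((\<lambda>t. f j (x + t *\<^sub>R d)) \<longlongrightarrow> f j x) (at_right 0)" for j
  proof -
    have "((\<lambda>t. x + t *\<^sub>R d) \<longlongrightarrow> x) (at_right 0)"
      by (auto intro!: tendsto_eq_intros)
    with deriv[THEN has_derivative_continuous] show ?thesis by (rule isCont_tendsto_compose)
  qed
  have dominated: "\<forall>\<^sub>F t in at_right 0. \<forall>j\<in>-A. f j (x + t *\<^sub>R d) < f j0 (x + t *\<^sub>R d)"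
  proof (intro eventually_ball_finite ballI)
    fix j assume "j \<in> -A"
    then have "f j x < f j0 x" using Phi_ge[of f j x] j0 by (auto simp: A_def active_set_def)
    moreover have "((\<lambda>t. f j0 (x + t *\<^sub>R d) - f j (x + t *\<^sub>R d)) \<longlongrightarrow> f j0 x - f j x) (at_right 0)"
      by (intro tendsto_diff tendsto_along_ray)
    ultimately have "\<forall>\<^sub>F t in at_right 0. 0 < f j0 (x + t *\<^sub>R d) - f j (x + t *\<^sub>R d)"
      by (intro order_tendstoD(1)) auto
    then show "\<forall>\<^sub>F t in at_right 0. f j (x + t *\<^sub>R d) < f j0 (x + t *\<^sub>R d)"
      by simp
  qed simp
  \<comment> \<open>For small \<open>t\<close> the maximum is attained at an active index, where \<open>f j x = Phi f x\<close>.\<close>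
  have "\<forall>\<^sub>F t in at_right 0.
          Sup ((\<lambda>j. (f j (x + t *\<^sub>R d) - f j x) / t) ` A) = (Phi f (x + t *\<^sub>R d) - Phi f x) / t"
    using dominated eventually_at_right_less[of "0::real"]
  proof eventually_elim
    case (elim t)
    obtain j1 where j1: "Phi f (x + t *\<^sub>R d) = f j1 (x + t *\<^sub>R d)" using Phi_attained[of f] by blast
    have "j1 \<in> A"
      using elim j1 Phi_ge[of f j0 "x + t *\<^sub>R d"] by (metis ComplI linorder_not_le)
    show ?case
    proof (rule cSup_eq_maximum)
      show "(Phi f (x + t *\<^sub>R d) - Phi f x) / t \<in> (\<lambda>j. (f j (x + t *\<^sub>R d) - f j x) / t) ` A"
        using \<open>j1 \<in> A\<close> j1 by (force simp: A_def active_set_def)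
    next
      fix q assume "q \<in> (\<lambda>j. (f j (x + t *\<^sub>R d) - f j x) / t) ` A"
      then show "q \<le> (Phi f (x + t *\<^sub>R d) - Phi f x) / t"
        using elim Phi_ge[of f _ "x + t *\<^sub>R d"]
        by (auto simp: A_def active_set_def intro!: divide_right_mono)
    qed
  qed
  moreover have "((\<lambda>t. Sup ((\<lambda>j. (f j (x + t *\<^sub>R d) - f j x) / t) ` A))
                   \<longlongrightarrow> Sup ((\<lambda>j. f' j d) ` A)) (at_right 0)"
    by (intro tendsto_Sup has_derivative_dir_quotient_tendsto deriv) simp
  ultimately have "((\<lambda>t. (Phi f (x + t *\<^sub>R d) - Phi f x) / t) \<longlongrightarrow> Sup ((\<lambda>j. f' j d) ` A))
                    (at_right 0)"
    by (rule Lim_transform_eventually[rotated])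
  moreover have "Sup ((\<lambda>j. f' j d) ` A) = Max ((\<lambda>j. f' j d) ` A)"
    using active_set_nonempty[of f x] by (simp add: A_def cSup_eq_Max)
  ultimately show ?thesis by (simp add: A_def)
qed

lemma qp_obj_minimizer_vertex_ineq:
  fixes f :: "'m::finite \<Rightarrow> real ^ 'n \<Rightarrow> real"
    and gradf :: "'m \<Rightarrow> real ^ 'n \<Rightarrow> real ^ 'n"
  assumes lam: "lam \<in> unit_simplex"
    and opt: "\<forall>mu\<in>unit_simplex. qp_obj f gradf x lam \<le> qp_obj f gradf x mu"
  defines "s \<equiv> \<Sum>j\<in>UNIV. lam j *\<^sub>R gradf j x"
  shows "f i x - (\<Sum>j\<in>UNIV. lam j * f j x) \<le> s \<bullet> (gradf i x - s)"
proof -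
  define F where "F = (\<Sum>j\<in>UNIV. lam j * f j x)"
  define g where "g = gradf i x"
  define c where "c = s \<bullet> (g - s) - (f i x - F)"
  have "0 \<le> c + t / 2 * (norm (g - s))\<^sup>2" if t: "0 < t" "t \<le> 1" for t
  proof -
    define mu where "mu = (\<lambda>j. (1 - t) * lam j + t * (if j = i then 1 else 0))"
    have "mu \<in> unit_simplex"
      using lam t by (auto simp: unit_simplex_def mu_def sum.distrib sum_distrib_left[symmetric])
    then have le: "qp_obj f gradf x lam \<le> qp_obj f gradf x mu" using opt by blast
    have grad: "(\<Sum>j\<in>UNIV. mu j *\<^sub>R gradf j x) = (1 - t) *\<^sub>R s + t *\<^sub>R g"
      by (simp add: mu_def scaleR_add_left sum.distrib scaleR_sum_right s_def g_def
          if_distrib[of "\<lambda>c. t * c"] if_distrib[of "\<lambda>c. c *\<^sub>R _"] cong: if_cong)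
    have val: "(\<Sum>j\<in>UNIV. mu j * f j x) = (1 - t) * F + t * f i x"
      by (simp add: mu_def distrib_right sum.distrib sum_distrib_left[symmetric] F_def
          mult.assoc if_distrib[of "\<lambda>c. t * c"] if_distrib[of "\<lambda>c. c * _"] cong: if_cong)
    have "qp_obj f gradf x mu - qp_obj f gradf x lam
            = (1/2) * (norm ((1 - t) *\<^sub>R s + t *\<^sub>R g))\<^sup>2 - ((1 - t) * F + t * f i x)
              - ((1/2) * (norm s)\<^sup>2 - F)"
      unfolding qp_obj_def grad val by (simp add: s_def F_def)
    also have "\<dots> = t * (c + t / 2 * (norm (g - s))\<^sup>2)"
      unfolding c_def power2_norm_eq_inner
      by (simp add: inner_add_left inner_add_right inner_diff_left inner_diff_right
          power2_eq_square algebra_simps inner_commute)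
    finally have "0 \<le> t * (c + t / 2 * (norm (g - s))\<^sup>2)" using le by linarith
    with t show ?thesis by (simp add: zero_le_mult_iff)
  qed
  then have "\<forall>\<^sub>F t in at_right 0. 0 \<le> c + t / 2 * (norm (g - s))\<^sup>2"
    by (auto simp: eventually_at_right_field intro: exI[of _ 1])
  moreover have "((\<lambda>t. c + t / 2 * (norm (g - s))\<^sup>2) \<longlongrightarrow> c) (at_right 0)"
    by (auto intro!: tendsto_eq_intros)
  ultimately have "0 \<le> c" by (intro tendsto_lowerbound) auto
  then show ?thesis by (simp add: c_def F_def g_def)
qed

lemma algX_active_gradient_descent:
  assumes alg: "algX f gradf x lam p d alpha"
    and dk: "d k \<noteq> 0"
    and active: "i \<in> active_set f (x k)"
  shows "gradf i (x k) \<bullet> d k < 0"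
proof -
  define s where "s = (\<Sum>j\<in>UNIV. lam k j *\<^sub>R gradf j (x k))"
  have lam: "lam k \<in> unit_simplex"
    and opt: "\<forall>mu\<in>unit_simplex. qp_obj f gradf (x k) (lam k) \<le> qp_obj f gradf (x k) mu"
    and "p k = - s" and "d k = (if p k = 0 then 0 else (1 / norm (p k)) *\<^sub>R p k)"
    using alg unfolding algX_def s_def by blast+
  with dk have "s \<noteq> 0" and d: "d k = - ((1 / norm s) *\<^sub>R s)" by auto
  have "0 \<le> f i (x k) - (\<Sum>j\<in>UNIV. lam k j * f j (x k))"
    using convex_combination_le_Phi[OF lam] active by (simp add: active_set_def)
  also have "\<dots> \<le> s \<bullet> (gradf i (x k) - s)"
    unfolding s_def by (rule qp_obj_minimizer_vertex_ineq[OF lam opt])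
  finally have "s \<bullet> s \<le> gradf i (x k) \<bullet> s" by (simp add: inner_diff_right inner_commute)
  moreover have "0 < s \<bullet> s" using \<open>s \<noteq> 0\<close> by simp
  ultimately have "0 < gradf i (x k) \<bullet> s" by linarith
  then show ?thesis using \<open>s \<noteq> 0\<close> by (simp add: d)
qed

theorem theorem3:
  fixes f :: "'m::finite \<Rightarrow> real ^ 'n \<Rightarrow> real"
    and gradf :: "'m \<Rightarrow> real ^ 'n \<Rightarrow> real ^ 'n"
    and M :: real and w :: "real \<Rightarrow> real"
    and x :: "nat \<Rightarrow> real ^ 'n" and lam :: "nat \<Rightarrow> 'm \<Rightarrow> real"
    and p d :: "nat \<Rightarrow> real ^ 'n" and alpha :: "nat \<Rightarrow> real" and k :: nat
  assumes H1: "\<And>j y. f j y \<ge> M"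
    and H2_deriv: "\<And>j y. (f j has_derivative (\<lambda>h. gradf j y \<bullet> h)) (at y)"
    and H2_cont: "\<And>j. continuous_on UNIV (gradf j)"
    and w_mono: "mono_on {0..} w" and w_nonneg: "\<And>t. t \<ge> 0 \<Longrightarrow> w t \<ge> 0"
    and w_0: "w 0 = 0" and w_cont: "continuous (at_right 0) w"
    and H2_mod: "\<And>j y z. norm (gradf j y - gradf j z) \<le> w (norm (y - z))"
    and alg: "algX f gradf x lam p d alpha"
    and dk: "d k \<noteq> 0"
  shows "((\<lambda>t. (Phi f (x k + t *\<^sub>R d k) - Phi f (x k)) / t) \<longlongrightarrow> dir_deriv (Phi f) (x k) (d k))
           (at_right 0)
         \<and> dir_deriv (Phi f) (x k) (d k) < 0"
proof -
  define L where "L = Max ((\<lambda>j. gradf j (x k) \<bullet> d k) ` active_set f (x k))"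
  have lim: "((\<lambda>t. (Phi f (x k + t *\<^sub>R d k) - Phi f (x k)) / t) \<longlongrightarrow> L) (at_right 0)"
    unfolding L_def
    by (rule Phi_dir_quotient_tendsto[where f' = "\<lambda>j h. gradf j (x k) \<bullet> h", OF H2_deriv])
  then have "dir_deriv (Phi f) (x k) (d k) = L"
    unfolding dir_deriv_def by (intro tendsto_Lim) simp_all
  moreover have "L < 0"
    using algX_active_gradient_descent[OF alg dk] active_set_nonempty[of f "x k"]
    by (simp add: L_def Max_less_iff)
  ultimately show ?thesis using lim by simp
qed

end
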